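(* Let $k,n\in\mathbb N$ with $k\le n$, let $\lambda\vdash n$ be a partition, let $\pi\in\mathfrak S_n$ be a permutation with $\pi(l)=l$ for all $1\le l<k$, and let $T\in\operatorname{T}(\lambda)$ be a tabloid. Set $\tilde T:=\pi\circ T$, and for each cell $x\in\lambda$ let $T_x$ and $\tilde T_x$ be the intermediate tabloids arising in the Novelli--Pak--Stoyanovskii sorting of $T$ and of $\tilde T$, respectively. Then for every $x\in\lambda$ the permutation $\pi_x\in\mathfrak S_n$ defined by $\tilde T_x=\pi_x\circ T_x$ satisfies $\pi_x(l)=l$ for all $1\le l<k$.
   Context: A partition $\lambda\vdash n$ is identified with its Young diagram $\{(i,j)\in\mathbb Z^2: i\ge1,\ 1\le j\le\lambda_i\}$ (cells in matrix coordinates, row $i$, column $j$). A tabloid of shape $\lambda$ is a bijection $T:\lambda\to\{1,\dots,n\}$; $\operatorname{T}(\lambda)$ is the set of tabloids. $\mathfrak S_n$ acts by $\sigma(T):=\sigma\circ T$. The right and bottom neighbours of $(i,j)$ are the cells $(i,j+1),(i+1,j)$ lying in $\lambda$. Order the cells by $(i,j)\prec(k,l)$ iff $j<l$, or $j=l$ and $i<k$; list them as $z_1\prec\dots\prec z_n$. Novelli--Pak--Stoyanovskii sorting of $T$: set $T_{z_n}:=T$; for $m=n-1,n-2,\dots,1$, obtain $T_{z_m}$ from $T_{z_{m+1}}$ by the following slide $\sigma_{z_m}$ at $z_m$: the entry $a$ sitting in $z_m$ is repeatedly exchanged with the smaller of the entries in its current right and bottom neighbours, as long as that smaller entry is less than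 $a$ (if $a$ is smaller than all of them, or there are none, it stops). Thus $T_{z_m}=\sigma_{z_m}\circ T_{z_{m+1}}$ where $\sigma_{z_m}$ is a cyclic permutation of entries. The output $T_{z_1}$ is a standard Young tableau. *)

theory Defs
  imports "HOL-Combinatorics.Permutations"
begin

type_synonym cell = "nat \<times> nat"

definition is_partition :: "nat list \<Rightarrow> nat \<Rightarrow> bool" where
  "is_partition lam n \<longleftrightarrow> sorted_wrt (\<ge>) lam \<and> (\<forall>a\<in>set lam. 0 < a) \<and> sum_list lam = n"

text \<open>Young diagram, cells (i,j) in matrix coordinates, 1-based: row i has lam!(i-1) cells.\<close>
definition young :: "nat list \<Rightarrow> cell set" where
  "young lam = {(i,j). 1 \<le> i \<and> i \<le> length lam \<and> 1 \<le> j \<and> j \<le> lam ! (i - 1)}"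

text \<open>Tabloids: bijections from the diagram onto 1..n (values outside the diagram are irrelevant).\<close>
definition tabloids :: "nat list \<Rightarrow> (cell \<Rightarrow> nat) set" where
  "tabloids lam = {T. bij_betw T (young lam) {1..sum_list lam}}"

lemma young_bound:
  assumes "(i,j) \<in> young lam"
  shows "i + j \<le> length lam + sum_list lam"
proof -
  from assms have i: "1 \<le> i" "i \<le> length lam" and j: "j \<le> lam ! (i - 1)"
    by (auto simp: young_def)
  have "lam ! (i - 1) \<in> set lam" using i by auto
  hence "lam ! (i - 1) \<le> sum_list lam" by (simp add: member_le_sum_list)
  with i j show ?thesis by linarith
qed

function slide :: "nat list \<Rightarrow> (cell \<Rightarrow> nat) \<Rightarrow> cell \<Rightarrow> (cell \<Rightarrow> nat)" where
  "slide lam T (i,j) =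
     (let R = (i, j+1); B = (i+1, j); Y = young lam;
          q = (if R \<in> Y \<and> B \<in> Y then (if T B < T R then B else R)
               else if R \<in> Y then R else B)
      in if q \<in> Y \<and> T q < T (i,j)
         then slide lam (T((i,j) := T q, q := T (i,j))) q
         else T)"
  by pat_completeness auto
termination
proof (relation "measure (\<lambda>(lam, T, (i,j)). Suc (length lam + sum_list lam) - (i + j))", goal_cases)
  case 1 then show ?case by simp
next
  case (2 lam T i j R B Y q)
  then have qY: "q \<in> young lam" and q: "q = (i, j+1) \<or> q = (i+1, j)" by (auto split: if_splits)
  obtain a b where ab: "q = (a,b)" by (cases q)
  have "a + b \<le> length lam + sum_list lam" using young_bound qY ab by blast
  moreover have "a + b = i + j + 1" using q ab by auto
  ultimately show ?case using ab by simp
qed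

text \<open>The cells listed in the order z_1 < ... < z_n: column by column, top to bottom.\<close>
definition cells_list :: "nat list \<Rightarrow> cell list" where
  "cells_list lam = [(i,j). j \<leftarrow> [1..<Suc (sum_list lam)], i \<leftarrow> [1..<Suc (length lam)],
                            (i,j) \<in> young lam]"

text \<open>Intermediate NPS tabloid T_x: for x = z_{p+1} (0-based position p in cells_list),
  T_x = slide at z_{p+1} applied after ... after slide at z_{n-1}, starting from T_{z_n} = T.\<close>
definition nps_tab :: "nat list \<Rightarrow> (cell \<Rightarrow> nat) \<Rightarrow> cell \<Rightarrow> (cell \<Rightarrow> nat)" where
  "nps_tab lam T x =
     (let zs = cells_list lam; p = (LEAST p. p < length zs \<and> zs ! p = x)
      in foldr (\<lambda>z T'. slide lam T' z) (drop p (butlast zs)) T)"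

end

theory Submission
  imports Defs
begin

text \<open>Call an entry small if it is less than \<open>k\<close>. As \<open>\<pi>\<close> fixes the small values, \<open>T\<close> and
  \<open>\<pi> \<circ> T\<close> agree on small entries: the same cells carry them, with the same values. Every slide
  preserves this agreement. If the sliding entry is small, or is large but has a small neighbour,
  the smaller neighbour is small, hence the same in both tabloids, and both slides make the same
  move. Otherwise the large entry meets only large entries and leaves all small entries in place:
  along the NPS order, the small entries of the region already processed are closed under passing
  to upper and left neighbours, so a large entry without small neighbours never gets one later.
  Thus \<open>T\<^sub>x\<close> and \<open>\<pi>\<^sub>x \<circ> T\<^sub>x\<close> carry every value \<open>l < k\<close> in the same cell, and \<open>\<pi>\<^sub>x\<close> fixes it.\<close>

definition neighbour :: "cell \<Rightarrow> cell \<Rightarrow> bool" where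
  "neighbour y y' \<longleftrightarrow> y' = (fst y, snd y + 1) \<or> y' = (fst y + 1, snd y)"

lemma neighbour_neq: "neighbour y y' \<Longrightarrow> y \<noteq> y'"
  by (cases y) (auto simp: neighbour_def)

definition slide_target :: "nat list \<Rightarrow> (cell \<Rightarrow> nat) \<Rightarrow> cell \<Rightarrow> cell" where
  "slide_target lam S c = (let R = (fst c, snd c + 1); B = (fst c + 1, snd c); Y = young lam in
     if R \<in> Y \<and> B \<in> Y then (if S B < S R then B else R) else if R \<in> Y then R else B)"

lemma neighbour_slide_target: "neighbour c (slide_target lam S c)"
  by (auto simp: slide_target_def neighbour_def Let_def)

lemma slide_target_minimal:
  "neighbour c y \<Longrightarrow> y \<in> young lam \<Longrightarrow>
   slide_target lam S c \<in> young lam \<and> S (slide_target lam S c) \<le> S y"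
  by (auto simp: slide_target_def neighbour_def Let_def)

lemma neighbour_induct [case_names step]:
  assumes "\<And>c. (\<And>q. q \<in> young lam \<Longrightarrow> neighbour c q \<Longrightarrow> P q) \<Longrightarrow> P c"
  shows "P c"
proof (induction c rule: measure_induct_rule[where f = "\<lambda>c. Suc (length lam + sum_list lam) - (fst c + snd c)"])
  case (less c)
  show ?case
  proof (rule assms)
    fix q assume "q \<in> young lam" "neighbour c q"
    then show "P q"
      using young_bound[of "fst q" "snd q" lam] by (intro less) (auto simp: neighbour_def)
  qed
qed

declare slide.simps [simp del]

lemma slide_unfold:
  "slide lam S c = (if slide_target lam S c \<in> young lam \<and> S (slide_target lam S c) < S c
     then slide lam (S(c := S (slide_target lam S c), slide_target lam S c := S c)) (slide_target lam S c)
     else S)"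
  by (cases c) (simp only:, subst slide.simps, simp add: slide_target_def Let_def)

lemma slide_step:
  assumes "q = slide_target lam S c" "q \<in> young lam \<and> S q < S c"
  shows "slide lam S c = slide lam (S(c := S q, q := S c)) q"
  using assms by (subst slide_unfold) simp

lemma slide_stop:
  assumes "\<not> (slide_target lam S c \<in> young lam \<and> S (slide_target lam S c) < S c)"
  shows "slide lam S c = S"
  using assms by (subst slide_unfold) (rule if_not_P)

definition agree_below :: "nat \<Rightarrow> cell set \<Rightarrow> (cell \<Rightarrow> nat) \<Rightarrow> (cell \<Rightarrow> nat) \<Rightarrow> bool" where
  "agree_below k Y S S' \<longleftrightarrow> (\<forall>y\<in>Y. S y < k \<or> S' y < k \<longrightarrow> S y = S' y)"

lemma agree_belowD: "agree_below k Y S S' \<Longrightarrow> y \<in> Y \<Longrightarrow> S y < k \<or> S' y < k \<Longrightarrow> S y = S' y"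
  unfolding agree_below_def by blast

lemma agree_below_small_iff: "agree_below k Y S S' \<Longrightarrow> y \<in> Y \<Longrightarrow> S y < k \<longleftrightarrow> S' y < k"
  by (metis agree_belowD)

lemma agree_below_sym: "agree_below k Y S S' \<Longrightarrow> agree_below k Y S' S"
  unfolding agree_below_def by fastforce

lemma agree_below_trans:
  "agree_below k Y S1 S2 \<Longrightarrow> agree_below k Y S2 S3 \<Longrightarrow> agree_below k Y S1 S3"
  unfolding agree_below_def
proof
  fix y assume "y \<in> Y"
  moreover assume "\<forall>y\<in>Y. S1 y < k \<or> S2 y < k \<longrightarrow> S1 y = S2 y" "\<forall>y\<in>Y. S2 y < k \<or> S3 y < k \<longrightarrow> S2 y = S3 y"
  ultimately have "S1 y < k \<or> S2 y < k \<longrightarrow> S1 y = S2 y" "S2 y < k \<or> S3 y < k \<longrightarrow> S2 y = S3 y"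
    by blast+
  then show "S1 y < k \<or> S3 y < k \<longrightarrow> S1 y = S3 y"
    by linarith
qed

lemma agree_below_subset: "agree_below k Y S S' \<Longrightarrow> Z \<subseteq> Y \<Longrightarrow> agree_below k Z S S'"
  unfolding agree_below_def by blast

lemma agree_below_swap:
  assumes "agree_below k Y S S'" "c \<in> Y" "q \<in> Y"
  shows "agree_below k Y (S(c := S q, q := S c)) (S'(c := S' q, q := S' c))"
proof -
  have "\<exists>z\<in>Y. (S(c := S q, q := S c)) y = S z \<and> (S'(c := S' q, q := S' c)) y = S' z"
    if "y \<in> Y" for y
    using that assms(2,3) by (cases "y = q"; cases "y = c") auto
  then show ?thesis
    using agree_belowD[OF assms(1)] unfolding agree_below_def by metis
qed

definition small_ideal :: "nat \<Rightarrow> cell set \<Rightarrow> (cell \<Rightarrow> nat) \<Rightarrow> bool" where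
  "small_ideal k R S \<longleftrightarrow> (\<forall>y\<in>R. \<forall>y'\<in>R. neighbour y y' \<longrightarrow> S y' < k \<longrightarrow> S y < k)"

text \<open>While a large entry travels through the sorted region it sits at \<open>c\<close>, the only cell
  where the ideal property may fail, and every cell directly above or left of it is small.\<close>
definition small_ideal_except :: "nat \<Rightarrow> cell set \<Rightarrow> cell \<Rightarrow> (cell \<Rightarrow> nat) \<Rightarrow> bool" where
  "small_ideal_except k R c S \<longleftrightarrow> (\<forall>y\<in>R - {c}. \<forall>y'\<in>R. neighbour y y' \<longrightarrow> S y' < k \<longrightarrow> S y < k)"

definition small_predecessors :: "nat \<Rightarrow> cell set \<Rightarrow> cell \<Rightarrow> (cell \<Rightarrow> nat) \<Rightarrow> bool" where
  "small_predecessors k R c S \<longleftrightarrow> (\<forall>y\<in>R. neighbour y c \<longrightarrow> S y < k)"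

definition neighbour_closed :: "nat list \<Rightarrow> cell set \<Rightarrow> bool" where
  "neighbour_closed lam R \<longleftrightarrow> R \<subseteq> young lam \<and> (\<forall>y\<in>R. \<forall>y'\<in>young lam. neighbour y y' \<longrightarrow> y' \<in> R)"

lemma small_ideal_cong:
  "(\<And>y. y \<in> R \<Longrightarrow> S y < k \<longleftrightarrow> S' y < k) \<Longrightarrow> small_ideal k R S \<Longrightarrow> small_ideal k R S'"
  unfolding small_ideal_def by blast

lemma small_ideal_agree_below:
  assumes "agree_below k Y S S'" "R \<subseteq> Y" "small_ideal k R S"
  shows "small_ideal k R S'"
  by (rule small_ideal_cong[OF _ assms(3)]) (use assms(1,2) agree_below_small_iff in blast)

lemma swap_image:
  assumes "c \<in> Y" "q \<in> Y"
  shows "(S(c := S q, q := S c)) ` Y = S ` Y"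
proof -
  have "S(c := S q, q := S c) = S \<circ> transpose c q"
    by (rule ext) (simp add: transpose_def)
  then show ?thesis
    using permutes_image[OF permutes_swap_id[OF assms]] by (metis image_comp)
qed

lemma slide_image: "c \<in> young lam \<Longrightarrow> slide lam S c ` young lam = S ` young lam"
proof (induction c arbitrary: S rule: neighbour_induct[of lam])
  case (step c)
  let ?q = "slide_target lam S c"
  show ?case
  proof (cases "?q \<in> young lam \<and> S ?q < S c")
    case True
    then show ?thesis
      using step swap_image[of c "young lam" ?q S] neighbour_slide_target
      by (simp add: slide_step[OF refl True])
  qed (simp add: slide_stop)
qed

lemma slide_small_cells:
  "S c < k \<Longrightarrow> slide lam S c y < k \<longleftrightarrow> S y < k"
proof (induction c arbitrary: S rule: neighbour_induct[of lam])
  case (step c)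
  let ?q = "slide_target lam S c"
  show ?case
  proof (cases "?q \<in> young lam \<and> S ?q < S c")
    case True
    let ?S1 = "S(c := S ?q, ?q := S c)"
    have "slide lam ?S1 ?q y < k \<longleftrightarrow> ?S1 y < k"
      using True step neighbour_slide_target by (intro step.IH) auto
    moreover have "?S1 y < k \<longleftrightarrow> S y < k"
      using True step.prems by auto
    ultimately show ?thesis
      using True by (simp add: slide_step[OF refl True])
  qed (simp add: slide_stop)
qed

lemma slide_target_agree_below:
  assumes agree: "agree_below k (young lam) S S'"
    and y: "y \<in> young lam" "neighbour c y" "S y < k"
  shows "slide_target lam S' c = slide_target lam S c"
proof -
  let ?R = "(fst c, snd c + 1)" and ?B = "(fst c + 1, snd c)"
  have "S' ?B < S' ?R \<longleftrightarrow> S ?B < S ?R" if "?R \<in> young lam" "?B \<in> young lam"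
  proof -
    have small: "S ?R < k \<or> S ?B < k"
      using y by (auto simp: neighbour_def)
    have "S ?R < k \<longleftrightarrow> S' ?R < k" "S ?B < k \<longleftrightarrow> S' ?B < k"
      using agree_below_small_iff[OF agree] that by blast+
    moreover have "S ?R < k \<Longrightarrow> S ?R = S' ?R" "S ?B < k \<Longrightarrow> S ?B = S' ?B"
      using agree_belowD[OF agree] that by blast+
    ultimately show ?thesis
      using small by linarith
  qed
  then show ?thesis
    by (simp add: slide_target_def Let_def)
qed

lemma slide_agree_below_small_start:
  assumes "c \<in> young lam" "S c < k" "agree_below k (young lam) S S'"
  shows "agree_below k (young lam) (slide lam S c) (slide lam S' c)"
  using assms
proof (induction c arbitrary: S S' rule: neighbour_induct[of lam])
  case (step c)
  let ?q = "slide_target lam S c" and ?q' = "slide_target lam S' c"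
  have c': "S' c = S c"
    using agree_belowD[OF step.prems(3,1)] step.prems(2) by simp
  show ?case
  proof (cases "?q \<in> young lam \<and> S ?q < S c")
    case True
    have q': "?q' = ?q"
      using slide_target_agree_below[OF step.prems(3)] True step.prems(2) neighbour_slide_target
      by (meson less_trans)
    have "S ?q < k"
      using True step.prems(2) by simp
    then have "S ?q = S' ?q"
      using agree_belowD[OF step.prems(3)] True by blast
    then have True': "?q \<in> young lam \<and> S' ?q < S' c"
      using True c' by simp
    have "agree_below k (young lam) (slide lam (S(c := S ?q, ?q := S c)) ?q)
                                     (slide lam (S'(c := S' ?q, ?q := S' c)) ?q)"
      using True step.prems neighbour_slide_target
      by (intro step.IH agree_below_swap) auto
    then show ?thesis
      by (simp add: slide_step[OF refl True] slide_step[OF q'[symmetric] True'])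
  next
    case False
    have "\<not> (?q' \<in> young lam \<and> S' ?q' < S' c)"
    proof
      assume moves': "?q' \<in> young lam \<and> S' ?q' < S' c"
      have agree': "agree_below k (young lam) S' S"
        using agree_below_sym step.prems(3) .
      have "?q = ?q'"
        using slide_target_agree_below[OF agree'] moves' step.prems(2) c' neighbour_slide_target
        by (metis less_trans)
      moreover have "S ?q' = S' ?q'"
        using agree_belowD[OF agree'] moves' step.prems(2) c' by (metis less_trans)
      ultimately show False
        using False moves' c' by simp
    qed
    then show ?thesis
      using step.prems(3) by (simp add: slide_stop False)
  qed
qed

text \<open>The ideal property forces every entry the large one meets to be large as well.\<close>
lemma slide_large_start_keeps_small:
  assumes "neighbour_closed lam R" "c \<in> R" "\<not> S c < k" "small_ideal k R S"
  shows "agree_below k UNIV (slide lam S c) S"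
  using assms
proof (induction c arbitrary: S rule: neighbour_induct[of lam])
  case (step c)
  let ?q = "slide_target lam S c"
  show ?case
  proof (cases "?q \<in> young lam \<and> S ?q < S c")
    case True
    let ?S1 = "S(c := S ?q, ?q := S c)"
    have qR: "?q \<in> R"
      using step.prems(1,2) True neighbour_slide_target unfolding neighbour_closed_def by blast
    have q_large: "\<not> S ?q < k"
      using step.prems(2-4) qR neighbour_slide_target unfolding small_ideal_def by blast
    have swap: "agree_below k UNIV ?S1 S"
      using q_large step.prems(3) unfolding agree_below_def by auto
    have "small_ideal k R ?S1"
      using small_ideal_agree_below[OF agree_below_sym[OF swap] _ step.prems(4)] by simp
    moreover have "\<not> ?S1 ?q < k"
      using step.prems(3) by simp
    ultimately have "agree_below k UNIV (slide lam ?S1 ?q) ?S1"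
      using step.IH[OF _ neighbour_slide_target step.prems(1) qR] True by blast
    then show ?thesis
      using agree_below_trans swap by (simp add: slide_step[OF refl True])
  next
    case False
    then show ?thesis
      by (simp add: slide_stop agree_below_def)
  qed
qed

lemma slide_agree_below_large_start:
  assumes closed: "neighbour_closed lam R" and c: "c \<in> R" "\<not> S c < k"
    and ideal: "small_ideal k R S" and agree: "agree_below k (young lam) S S'"
  shows "agree_below k (young lam) (slide lam S c) (slide lam S' c) \<and> small_ideal k R (slide lam S c)"
proof
  have RY: "R \<subseteq> young lam"
    using closed unfolding neighbour_closed_def by blast
  have "agree_below k UNIV (slide lam S c) S"
    using slide_large_start_keeps_small[OF closed c ideal] .
  then have left: "agree_below k (young lam) (slide lam S c) S"
    by (rule agree_below_subset) simp
  have "\<not> S' c < k"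
    using agree_below_small_iff[OF agree, of c] c RY by blast
  then have "agree_below k UNIV (slide lam S' c) S'"
    using slide_large_start_keeps_small[OF closed c(1)] small_ideal_agree_below[OF agree RY ideal]
    by blast
  then have right: "agree_below k (young lam) S' (slide lam S' c)"
    by (rule agree_below_sym[OF agree_below_subset]) simp
  show "agree_below k (young lam) (slide lam S c) (slide lam S' c)"
    using agree_below_trans[OF agree_below_trans[OF left agree] right] .
  show "small_ideal k R (slide lam S c)"
    using small_ideal_agree_below[OF agree_below_sym[OF left] RY ideal] .
qed

lemma small_ideal_except_swap:
  assumes "neighbour c q" "q \<in> R" "S q < k" "\<not> S c < k"
    and "small_ideal_except k R c S" "small_predecessors k R c S"
  shows "small_ideal_except k R q (S(c := S q, q := S c))
    \<and> small_predecessors k R q (S(c := S q, q := S c))"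
proof -
  let ?S1 = "S(c := S q, q := S c)"
  have cq: "c \<noteq> q"
    using neighbour_neq assms(1) .
  have "small_ideal_except k R q ?S1"
    unfolding small_ideal_except_def
  proof (intro ballI impI)
    fix y y' assume y: "y \<in> R - {q}" and y': "y' \<in> R" and yy': "neighbour y y'" and small: "?S1 y' < k"
    show "?S1 y < k"
    proof (cases "y = c")
      case True
      then show ?thesis using cq assms(3) by simp
    next
      case yc: False
      have "y' \<noteq> q"
        using small assms(4) by auto
      then have "S y < k"
        using assms(5,6) y y' yy' small yc
        unfolding small_ideal_except_def small_predecessors_def by (cases "y' = c") auto
      then show ?thesis
        using y yc by simp
    qed
  qed
  moreover have "small_predecessors k R q ?S1"
    unfolding small_predecessors_def
  proof (intro ballI impI)
    fix y assume y: "y \<in> R" and yq: "neighbour y q"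
    show "?S1 y < k"
    proof (cases "y = c")
      case True
      then show ?thesis using cq assms(3) by simp
    next
      case False
      then have "S y < k"
        using assms(2,3,5) y yq neighbour_neq[OF yq] unfolding small_ideal_except_def by blast
      then show ?thesis
        using False neighbour_neq[OF yq] by simp
    qed
  qed
  ultimately show ?thesis ..
qed

lemma slide_agree_below:
  assumes "neighbour_closed lam R" "c \<in> R" "small_ideal_except k R c S" "small_predecessors k R c S"
    and "agree_below k (young lam) S S'"
  shows "agree_below k (young lam) (slide lam S c) (slide lam S' c) \<and> small_ideal k R (slide lam S c)"
  using assms
proof (induction c arbitrary: S S' rule: neighbour_induct[of lam])
  case (step c)
  have RY: "R \<subseteq> young lam"
    using step.prems(1) unfolding neighbour_closed_def by blast
  consider (small) "S c < k"
    | (small_successor) y where "\<not> S c < k" "y \<in> young lam" "neighbour c y" "S y < k"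
    | (large) "\<not> S c < k" "\<forall>y\<in>young lam. neighbour c y \<longrightarrow> \<not> S y < k"
    by blast
  then show ?case
  proof cases
    case small
    have ideal: "small_ideal k R S"
      using step.prems(3) small unfolding small_ideal_except_def small_ideal_def by blast
    have "S y < k \<longleftrightarrow> slide lam S c y < k" for y
      using slide_small_cells[of S c k lam y] small by simp
    then have "small_ideal k R (slide lam S c)"
      by (rule small_ideal_cong[OF _ ideal])
    moreover have "c \<in> young lam"
      using step.prems(2) RY by blast
    ultimately show ?thesis
      using slide_agree_below_small_start[OF _ small step.prems(5)] by simp
  next
    case (small_successor y)
    let ?q = "slide_target lam S c"
    have qY: "?q \<in> young lam" and q_small: "S ?q < k"
      using slide_target_minimal[OF small_successor(3,2), of S] small_successor(4) by auto
    have qR: "?q \<in> R"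
      using step.prems(1,2) qY neighbour_slide_target unfolding neighbour_closed_def by blast
    have q': "slide_target lam S' c = ?q"
      using slide_target_agree_below[OF step.prems(5) small_successor(2-4)] .
    have "S ?q = S' ?q"
      using agree_belowD[OF step.prems(5) qY] q_small by blast
    moreover have "\<not> S' c < k"
      using agree_below_small_iff[OF step.prems(5), of c] small_successor(1) RY step.prems(2) by blast
    ultimately have moves: "?q \<in> young lam \<and> S ?q < S c" and moves': "?q \<in> young lam \<and> S' ?q < S' c"
      using qY q_small small_successor(1) by auto
    obtain except: "small_ideal_except k R ?q (S(c := S ?q, ?q := S c))"
      and preds: "small_predecessors k R ?q (S(c := S ?q, ?q := S c))"
      using small_ideal_except_swap[OF neighbour_slide_target qR q_small small_successor(1) step.prems(3,4)]
      by blast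
    have "c \<in> young lam"
      using step.prems(2) RY by blast
    then have agree: "agree_below k (young lam) (S(c := S ?q, ?q := S c)) (S'(c := S' ?q, ?q := S' c))"
      using agree_below_swap[OF step.prems(5) _ qY] by simp
    have "agree_below k (young lam) (slide lam (S(c := S ?q, ?q := S c)) ?q)
          (slide lam (S'(c := S' ?q, ?q := S' c)) ?q)
        \<and> small_ideal k R (slide lam (S(c := S ?q, ?q := S c)) ?q)"
      by (rule step.IH[OF qY neighbour_slide_target step.prems(1) qR except preds agree])
    then show ?thesis
      by (simp add: slide_step[OF refl moves] slide_step[OF q'[symmetric] moves'])
  next
    case large
    have "small_ideal k R S"
      using step.prems(2,3) large RY unfolding small_ideal_except_def small_ideal_def by blast
    then show ?thesis
      by (rule slide_agree_below_large_start[OF step.prems(1,2) large(1) _ step.prems(5)])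
  qed
qed

definition cell_less :: "cell \<Rightarrow> cell \<Rightarrow> bool" where
  "cell_less a b \<longleftrightarrow> snd a < snd b \<or> (snd a = snd b \<and> fst a < fst b)"

lemma cell_less_asym: "cell_less a b \<Longrightarrow> \<not> cell_less b a"
  by (auto simp: cell_less_def)

lemma neighbour_cell_less: "neighbour y y' \<Longrightarrow> cell_less y y'"
  by (auto simp: neighbour_def cell_less_def)

lemma sorted_cells_list: "sorted_wrt cell_less (cells_list lam)"
proof -
  have column: "sorted_wrt cell_less [(i, j). i \<leftarrow> rows, P i j]"
    if "sorted_wrt (<) rows" for rows j P
    using that by (induction rows) (auto simp: sorted_wrt_append cell_less_def)
  have columns: "sorted_wrt cell_less [(i, j). j \<leftarrow> cols, i \<leftarrow> rows, P i j]"
    if "sorted_wrt (<) cols" "sorted_wrt (<) rows" for cols rows P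
    using that
  proof (induction cols)
    case (Cons j cols)
    then show ?case
      using column[where rows = rows and j = j and P = P]
      by (simp add: sorted_wrt_append) (auto simp: cell_less_def)
  qed simp
  show ?thesis
    unfolding cells_list_def by (rule columns) (rule sorted_wrt_upt)+
qed

lemma set_cells_list: "set (cells_list lam) = young lam"
proof
  show "young lam \<subseteq> set (cells_list lam)"
  proof
    fix y assume y: "y \<in> young lam"
    obtain i j where ij: "y = (i, j)" by (cases y)
    have "j \<le> sum_list lam"
      using young_bound[of i j lam] y ij unfolding young_def
      by (auto intro: order.trans[OF _ member_le_sum_list])
    then show "y \<in> set (cells_list lam)" using y ij unfolding cells_list_def young_def by auto
  qed
qed (auto simp: cells_list_def)

lemma neighbour_closed_drop_cells_list: "neighbour_closed lam (set (drop p (cells_list lam)))"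
  unfolding neighbour_closed_def
proof (intro conjI ballI impI)
  show "set (drop p (cells_list lam)) \<subseteq> young lam"
    using set_drop_subset[of p "cells_list lam"] by (simp only: set_cells_list)
next
  fix y y' assume y: "y \<in> set (drop p (cells_list lam))" and y': "y' \<in> young lam"
    and "neighbour y y'"
  then have "\<not> cell_less y' y"
    using cell_less_asym neighbour_cell_less by blast
  moreover have "sorted_wrt cell_less (take p (cells_list lam) @ drop p (cells_list lam))"
    by (simp only: append_take_drop_id sorted_cells_list)
  then have "\<forall>x\<in>set (take p (cells_list lam)). cell_less x y"
    using y unfolding sorted_wrt_append by blast
  ultimately have "y' \<notin> set (take p (cells_list lam))"
    by blast
  then show "y' \<in> set (drop p (cells_list lam))"
    using y' set_cells_list by (metis Un_iff append_take_drop_id set_append)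
qed

abbreviation slides :: "nat list \<Rightarrow> cell list \<Rightarrow> (cell \<Rightarrow> nat) \<Rightarrow> (cell \<Rightarrow> nat)" where
  "slides lam cs S \<equiv> foldr (\<lambda>z S'. slide lam S' z) cs S"

lemma slides_image: "set cs \<subseteq> young lam \<Longrightarrow> slides lam cs S ` young lam = S ` young lam"
  by (induction cs) (simp_all add: slide_image)

lemma slides_agree_below:
  assumes "sorted_wrt cell_less cs" "neighbour_closed lam (set cs)" "agree_below k (young lam) S S'"
  shows "agree_below k (young lam) (slides lam cs S) (slides lam cs S')
    \<and> small_ideal k (set cs) (slides lam cs S)"
  using assms
proof (induction cs)
  case Nil
  then show ?case by (simp add: small_ideal_def)
next
  case (Cons c cs)
  have later: "\<not> neighbour y c" "y \<noteq> c" if "y \<in> set cs" for y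
  proof -
    have "cell_less c y"
      using Cons.prems(1) that by simp
    then show "\<not> neighbour y c" "y \<noteq> c"
      using cell_less_asym neighbour_cell_less by blast+
  qed
  have "neighbour_closed lam (set cs)"
    unfolding neighbour_closed_def
  proof (intro conjI ballI impI)
    show "set cs \<subseteq> young lam"
      using Cons.prems(2) unfolding neighbour_closed_def by simp
    fix y y' assume y: "y \<in> set cs" and "y' \<in> young lam" and yy': "neighbour y y'"
    then have "y' \<in> set (c # cs)"
      using Cons.prems(2) unfolding neighbour_closed_def by auto
    moreover have "y' \<noteq> c"
      using later(1)[OF y] yy' by blast
    ultimately show "y' \<in> set cs"
      by simp
  qed
  then obtain agree: "agree_below k (young lam) (slides lam cs S) (slides lam cs S')"
    and ideal: "small_ideal k (set cs) (slides lam cs S)"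
    using Cons by auto
  have "small_ideal_except k (set (c # cs)) c (slides lam cs S)"
    using ideal later unfolding small_ideal_except_def small_ideal_def by auto
  moreover have "small_predecessors k (set (c # cs)) c (slides lam cs S)"
    using later(1) neighbour_neq unfolding small_predecessors_def by fastforce
  ultimately show ?case
    using slide_agree_below[OF Cons.prems(2) _ _ _ agree] by simp
qed

lemma slide_without_successor: "(\<And>y. y \<in> young lam \<Longrightarrow> \<not> neighbour c y) \<Longrightarrow> slide lam S c = S"
  using neighbour_slide_target by (blast intro: slide_stop)

lemma last_cell_without_successor:
  assumes "cells_list lam \<noteq> []" "y \<in> young lam"
  shows "\<not> neighbour (last (cells_list lam)) y"
proof
  assume last_y: "neighbour (last (cells_list lam)) y"
  have "sorted_wrt cell_less (butlast (cells_list lam) @ [last (cells_list lam)])"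
    using assms(1) sorted_cells_list by (metis append_butlast_last_id)
  moreover have "y \<in> set (butlast (cells_list lam) @ [last (cells_list lam)])"
    using assms set_cells_list by (metis append_butlast_last_id)
  ultimately have "cell_less y (last (cells_list lam)) \<or> y = last (cells_list lam)"
    unfolding sorted_wrt_append by auto
  then show False
    using last_y neighbour_neq neighbour_cell_less cell_less_asym by blast
qed

lemma slides_butlast_drop_cells_list:
  "slides lam (butlast (drop p (cells_list lam))) S = slides lam (drop p (cells_list lam)) S"
proof (cases "p < length (cells_list lam)")
  case True
  define ds where "ds = butlast (drop p (cells_list lam))"
  have "drop p (cells_list lam) \<noteq> []"
    using True by simp
  then have split: "drop p (cells_list lam) = ds @ [last (cells_list lam)]"
    unfolding ds_def last_drop[OF True, symmetric] by (rule append_butlast_last_id[symmetric])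
  have "cells_list lam \<noteq> []"
    using True by auto
  then have "slide lam S' (last (cells_list lam)) = S'" for S'
    by (intro slide_without_successor last_cell_without_successor)
  then have "slides lam (drop p (cells_list lam)) S = slides lam ds S"
    by (simp add: split)
  then show ?thesis
    by (simp add: ds_def)
qed simp

lemma nps_tab_eq_slides:
  obtains cs where "sorted_wrt cell_less cs" "neighbour_closed lam (set cs)"
    "\<And>S. nps_tab lam S x = slides lam cs S"
proof
  let ?cs = "drop (LEAST p. p < length (cells_list lam) \<and> cells_list lam ! p = x) (cells_list lam)"
  show "sorted_wrt cell_less ?cs"
    by (rule sorted_wrt_drop[OF sorted_cells_list])
  show "neighbour_closed lam (set ?cs)"
    by (rule neighbour_closed_drop_cells_list)
  show "nps_tab lam S x = slides lam ?cs S" for S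
    unfolding nps_tab_def Let_def butlast_drop[symmetric] by (rule slides_butlast_drop_cells_list)
qed

lemma nps_tab_image: "nps_tab lam S x ` young lam = S ` young lam"
proof -
  obtain cs where "neighbour_closed lam (set cs)" "\<And>S. nps_tab lam S x = slides lam cs S"
    using nps_tab_eq_slides[of lam x] by blast
  then show ?thesis
    unfolding neighbour_closed_def by (simp add: slides_image)
qed

lemma nps_tab_agree_below:
  assumes "agree_below k (young lam) S S'"
  shows "agree_below k (young lam) (nps_tab lam S x) (nps_tab lam S' x)"
proof -
  obtain cs where "sorted_wrt cell_less cs" "neighbour_closed lam (set cs)"
    "\<And>S. nps_tab lam S x = slides lam cs S"
    using nps_tab_eq_slides[of lam x] by blast
  then show ?thesis
    using slides_agree_below assms by simp
qed

lemma agree_below_comp: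
  assumes "inj \<pi>" "\<And>l. l < k \<Longrightarrow> \<pi> l = l"
  shows "agree_below k Y T (\<pi> \<circ> T)"
  unfolding agree_below_def
proof (intro ballI impI)
  fix y assume "T y < k \<or> (\<pi> \<circ> T) y < k"
  then show "T y = (\<pi> \<circ> T) y"
  proof
    assume "(\<pi> \<circ> T) y < k"
    then have "\<pi> (\<pi> (T y)) = \<pi> (T y)"
      using assms(2) by simp
    then show ?thesis
      using assms(1) by (simp add: inj_eq)
  qed (simp add: assms(2))
qed

theorem lemma1:
  fixes k n :: nat and lam :: "nat list" and \<pi> :: "nat \<Rightarrow> nat" and T :: "cell \<Rightarrow> nat"
  assumes "k \<le> n"
    and "is_partition lam n"
    and "\<pi> permutes {1..n}"
    and "\<forall>l. 1 \<le> l \<and> l < k \<longrightarrow> \<pi> l = l"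
    and "T \<in> tabloids lam"
  shows "\<forall>x\<in>young lam. \<forall>\<sigma>. (\<sigma> permutes {1..n} \<and>
            (\<forall>y\<in>young lam. nps_tab lam (\<pi> \<circ> T) x y = \<sigma> (nps_tab lam T x y)))
          \<longrightarrow> (\<forall>l. 1 \<le> l \<and> l < k \<longrightarrow> \<sigma> l = l)"
proof (intro ballI allI impI)
  fix x \<sigma> l
  assume \<sigma>: "\<sigma> permutes {1..n} \<and> (\<forall>y\<in>young lam. nps_tab lam (\<pi> \<circ> T) x y = \<sigma> (nps_tab lam T x y))"
    and l: "1 \<le> l \<and> l < k"
  have "\<pi> l = l" if "l < k" for l
    using assms(4) that permutes_not_in[OF assms(3), of 0] by (cases "l = 0") auto
  then have "agree_below k (young lam) T (\<pi> \<circ> T)"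
    by (rule agree_below_comp[OF permutes_inj[OF assms(3)]])
  then have agree: "agree_below k (young lam) (nps_tab lam T x) (nps_tab lam (\<pi> \<circ> T) x)"
    by (rule nps_tab_agree_below)
  have "nps_tab lam T x ` young lam = {1..n}"
    using assms(2,5) unfolding nps_tab_image tabloids_def is_partition_def bij_betw_def by simp
  then obtain y where y: "y \<in> young lam" "nps_tab lam T x y = l"
    using l assms(1) by (metis atLeastAtMost_iff imageE le_trans less_imp_le)
  have "\<sigma> l = nps_tab lam (\<pi> \<circ> T) x y"
    using \<sigma> y by simp
  also have "\<dots> = l"
    using agree_belowD[OF agree y(1)] y(2) l by simp
  finally show "\<sigma> l = l" .
qed

end
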